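(* For every integer $m\ge2$, $P(m+1)<P(m)$, where $$P(m)=\frac{m}{\sqrt\pi}\int_{-\infty}^{\infty}e^{-t^2}\bigl(1-\Phi(t)\bigr)^{m-1}\,dt.$$
   Context: $\Phi$ is the standard normal cumulative distribution function. $P(m)$ is the limit as the number of voters tends to infinity of the probability that a Condorcet winner exists among $m$ candidates under the impartial culture (each voter independently picks one of the $m!$ strict rankings uniformly at random). *)

theory Defs
  imports "HOL-Probability.Probability"
begin

definition Phi :: "real \<Rightarrow> real" where
  "Phi x = (LINT t:{..x}|lborel. std_normal_density t)"

definition P :: "nat \<Rightarrow> real" where
  "P m = real m / sqrt pi * (LINT t|lborel. exp (- t\<^sup>2) * (1 - Phi t) ^ (m - 1))"

end

(* Write phi for the standard normal density, so that exp (-t^2) = 2 pi phi(t)^2 and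
   phi'(t) = -t phi(t). Integrating the derivative of phi (1 - Phi)^m over the real line
   gives P m = -2 sqrt pi T m, where T m is the integral of t phi(t) (1 - Phi t)^m.
   Hence P (m + 1) < P m amounts to the integral of h(t) = t phi(t) (1 - Phi t)^m Phi t
   being negative. Since phi is even and Phi (-t) = 1 - Phi t,
   h t + h (-t) = t phi(t) Phi(t) (1 - Phi t) ((1 - Phi t)^(m-1) - Phi(t)^(m-1)),
   which is negative for t > 0 because Phi t > 1/2 there and m >= 2. *)

theory Submission
  imports Defs "HOL-Real_Asymp.Real_Asymp"
begin

lemma integrable_mult_bounded:
  fixes f g :: "'a \<Rightarrow> real"
  assumes f: "integrable M f" and g: "g \<in> borel_measurable M" and bound: "\<And>x. \<bar>g x\<bar> \<le> B"
  shows "integrable M (\<lambda>x. f x * g x)"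
proof (rule Bochner_Integration.integrable_bound)
  show "integrable M (\<lambda>x. B * \<bar>f x\<bar>)"
    using f by (intro integrable_mult_right integrable_abs)
  show "AE x in M. norm (f x * g x) \<le> norm (B * \<bar>f x\<bar>)"
  proof (intro AE_I2)
    fix x
    have "\<bar>f x\<bar> * \<bar>g x\<bar> \<le> \<bar>f x\<bar> * \<bar>B\<bar>"
      using bound[of x] by (intro mult_left_mono) auto
    then show "norm (f x * g x) \<le> norm (B * \<bar>f x\<bar>)"
      by (simp add: abs_mult mult.commute)
  qed
qed (use f g in measurable)

lemma integral_pos_if_pos_on:
  fixes f :: "'a \<Rightarrow> real"
  assumes f: "integrable M f" and nonneg: "AE x in M. 0 \<le> f x"
    and A: "A \<in> sets M" "emeasure M A \<noteq> 0" and pos: "\<And>x. x \<in> A \<Longrightarrow> 0 < f x"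
  shows "0 < integral\<^sup>L M f"
proof -
  have "integral\<^sup>L M f \<noteq> 0"
  proof
    assume "integral\<^sup>L M f = 0"
    then have "AE x in M. f x = 0"
      using integral_nonneg_eq_0_iff_AE[OF f nonneg] by simp
    then have "AE x in M. x \<notin> A"
      by eventually_elim (use pos in force)
    then show False
      using A AE_iff_null_sets[of A M] by auto
  qed
  with integral_nonneg_AE[OF nonneg] show ?thesis by simp
qed

lemma lborel_integral_reflect:
  fixes f :: "real \<Rightarrow> 'a :: {banach, second_countable_topology}"
  shows "(LINT x|lborel. f (- x)) = (LINT x|lborel. f x)"
  using lborel_integral_real_affine[where c="-1" and t=0, of f] by simp

lemma lborel_integral_neg_if_reflection_sum_neg:
  fixes f :: "real \<Rightarrow> real"
  assumes f: "integrable lborel f" and neg: "\<And>x. 0 < x \<Longrightarrow> f x + f (- x) < 0"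
  shows "(LINT x|lborel. f x) < 0"
proof -
  define g where "g x = - (f x + f (- x))" for x
  have f_reflect: "integrable lborel (\<lambda>x. f (- x))"
    using lborel_integrable_real_affine[OF f, where c="-1" and t=0] by simp
  have g: "integrable lborel g"
    unfolding g_def using f f_reflect by (intro integrable_minus Bochner_Integration.integrable_add)
  have g_pos: "0 < g x" if "x \<noteq> 0" for x
    using that neg[of x] neg[of "- x"] by (cases "0 < x") (auto simp: g_def)
  have "0 < (LINT x|lborel. g x)"
  proof (rule integral_pos_if_pos_on[where A="{0<..<1}", OF g _ _ _ g_pos])
    show "AE x in lborel. 0 \<le> g x"
      using AE_lborel_singleton[of 0] by eventually_elim (use g_pos in force)
  qed auto
  moreover have "(LINT x|lborel. g x) = - 2 * (LINT x|lborel. f x)"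
    unfolding g_def using f f_reflect by (simp add: lborel_integral_reflect[of f])
  ultimately show ?thesis by simp
qed

lemma lborel_integral_eq_0_if_antiderivative_vanishes:
  fixes F f :: "real \<Rightarrow> real"
  assumes "\<And>x. (F has_real_derivative f x) (at x)" "\<And>x. isCont f x" "integrable lborel f"
    "(F \<longlongrightarrow> 0) at_top" "(F \<longlongrightarrow> 0) at_bot"
  shows "(LINT x|lborel. f x) = 0"
proof -
  have "(LBINT x=-\<infinity>..\<infinity>. f x) = 0 - 0"
    by (rule interval_integral_FTC_integrable[where F=F])
       (use assms in \<open>auto simp: has_real_derivative_iff_has_vector_derivative[symmetric]
          ereal_tendsto_simps1 set_integrable_def\<close>)
  then show ?thesis
    by (simp add: interval_lebesgue_integral_def set_lebesgue_integral_def)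
qed

lemma has_real_derivative_std_normal_density:
  "(std_normal_density has_real_derivative - x * std_normal_density x) (at x)"
proof -
  have "((\<lambda>x. exp (- x\<^sup>2 / 2)) has_real_derivative - x * exp (- x\<^sup>2 / 2)) (at x)"
    by (auto intro!: derivative_eq_intros simp: power2_eq_square)
  from DERIV_cmult[OF this, of "1 / sqrt (2 * pi)"] show ?thesis
    unfolding std_normal_density_def[abs_def] by (simp add: algebra_simps)
qed

lemma std_normal_density_minus: "std_normal_density (- x) = std_normal_density x"
  by (simp add: std_normal_density_def)

lemma set_integrable_std_normal_density:
  "A \<in> sets lborel \<Longrightarrow> set_integrable lborel A std_normal_density"
  unfolding set_integrable_def by (intro integrable_mult_indicator) auto

lemma std_normal_density_le_1: "std_normal_density x \<le> 1"
proof -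
  have "1 / sqrt (2 * pi) \<le> 1" using pi_gt3 by simp
  moreover have "exp (- x\<^sup>2 / 2) \<le> 1" by simp
  ultimately show ?thesis
    unfolding std_normal_density_def by (intro mult_le_one) auto
qed

lemma Phi_eq_add_interval_integral:
  assumes "a \<le> x"
  shows "Phi x = Phi a + (LBINT t=a..x. std_normal_density t)"
proof -
  have "{..x} = {..a} \<union> {a<..x}" using assms by auto
  then have "Phi x = (LINT t:{..a} \<union> {a<..x}|lborel. std_normal_density t)"
    unfolding Phi_def by simp
  also have "\<dots> = Phi a + (LINT t:{a<..x}|lborel. std_normal_density t)"
    unfolding Phi_def
    by (rule set_integral_Un) (auto intro: set_integrable_std_normal_density)
  finally show ?thesis using assms by (simp add: interval_integral_Ioc)
qed

lemma has_real_derivative_Phi: "(Phi has_real_derivative std_normal_density x) (at x)"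
proof -
  have "((\<lambda>y. LBINT t=x-1..y. std_normal_density t) has_vector_derivative std_normal_density x)
      (at x within {x-1..x+1})"
    by (rule interval_integral_FTC2)
       (auto simp: std_normal_density_def intro!: continuous_intros)
  then have "((\<lambda>y. Phi (x-1) + (LBINT t=x-1..y. std_normal_density t))
      has_real_derivative std_normal_density x) (at x)"
    using at_within_Icc_at[of "x-1" x "x+1"]
    by (auto intro!: derivative_eq_intros simp: has_real_derivative_iff_has_vector_derivative)
  then show ?thesis
    by (rule has_field_derivative_transform_within_open[where S="{x-1<..<x+1}"])
       (auto intro: Phi_eq_add_interval_integral[symmetric])
qed

lemma isCont_Phi: "isCont Phi x"
  using has_real_derivative_Phi by (rule DERIV_isCont)

lemma borel_measurable_Phi [measurable]: "Phi \<in> borel_measurable borel"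
  by (intro borel_measurable_continuous_onI continuous_at_imp_continuous_on ballI isCont_Phi)

lemma Phi_nonneg: "0 \<le> Phi x"
  unfolding Phi_def set_lebesgue_integral_def
  by (intro Bochner_Integration.integral_nonneg) (auto split: split_indicator)

lemma Phi_le_1: "Phi x \<le> 1"
proof -
  have "Phi x \<le> (LINT t|lborel. std_normal_density t)"
    unfolding Phi_def set_lebesgue_integral_def
    by (intro integral_mono integrable_mult_indicator) (auto split: split_indicator)
  then show ?thesis by simp
qed

lemma Phi_strict_mono:
  assumes "x < y"
  shows "Phi x < Phi y"
proof (rule DERIV_pos_imp_increasing[OF assms])
  show "\<exists>d. (Phi has_real_derivative d) (at t) \<and> 0 < d" for t
    using has_real_derivative_Phi normal_density_pos[of 1 0 t] by auto
qed

lemma Phi_less_1: "Phi x < 1"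
  using Phi_strict_mono[of x "x + 1"] Phi_le_1[of "x + 1"] by simp

lemma Phi_minus: "Phi (- x) = 1 - Phi x"
proof -
  have "Phi (- x) = (LINT t:{x..}|lborel. std_normal_density t)"
    unfolding Phi_def by (subst set_integral_reflect) (simp add: std_normal_density_minus atLeast_def)
  also have "\<dots> = (LINT t:{x<..}|lborel. std_normal_density t)"
    by (rule set_integral_discrete_difference[where X="{x}"]) auto
  finally have "Phi x + Phi (- x)
      = (LINT t:{..x}|lborel. std_normal_density t) + (LINT t:{x<..}|lborel. std_normal_density t)"
    unfolding Phi_def by simp
  also have "\<dots> = (LINT t:{..x} \<union> {x<..}|lborel. std_normal_density t)"
    by (rule set_integral_Un[symmetric])
       (auto intro: set_integrable_std_normal_density)
  also have "{..x} \<union> {x<..} = UNIV" by auto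
  finally show ?thesis by (simp add: set_lebesgue_integral_def)
qed

lemma Phi_0: "Phi 0 = 1 / 2"
  using Phi_minus[of 0] by simp

lemma power_swap_mult_less:
  fixes a b :: real
  assumes "0 < a" "a < b" "2 \<le> m"
  shows "a ^ m * b < b ^ m * a"
proof -
  obtain k where m: "m = Suc (Suc k)" using assms(3) by (metis add_2_eq_Suc le_Suc_ex)
  have "(a * b) * a ^ Suc k < (a * b) * b ^ Suc k"
    using assms by (intro mult_strict_left_mono power_strict_mono) auto
  then show ?thesis unfolding m by (simp add: algebra_simps)
qed

definition tail_moment :: "nat \<Rightarrow> real" where
  "tail_moment n = (LINT t|lborel. t * std_normal_density t * (1 - Phi t) ^ n)"

lemma integrable_std_normal_first_moment_bounded:
  assumes "g \<in> borel_measurable borel" "\<And>t. \<bar>g t\<bar> \<le> 1"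
  shows "integrable lborel (\<lambda>t. t * std_normal_density t * g t)"
proof -
  have "integrable lborel (\<lambda>t. std_normal_density t * t ^ 1 * g t)"
    using assms by (intro integrable_mult_bounded[OF integrable_std_normal_moment]) auto
  then show ?thesis by (simp add: ac_simps)
qed

lemma abs_one_minus_Phi_power_le_1: "\<bar>(1 - Phi t) ^ n\<bar> \<le> 1"
proof -
  have "0 \<le> 1 - Phi t" "1 - Phi t \<le> 1"
    using Phi_nonneg[of t] Phi_le_1[of t] by linarith+
  then have "0 \<le> (1 - Phi t) ^ n" "(1 - Phi t) ^ n \<le> 1"
    by (simp_all only: zero_le_power power_le_one)
  then show ?thesis by linarith
qed

lemma integral_sq_std_normal_density_Phi:
  "real n * (LINT t|lborel. std_normal_density t ^ 2 * (1 - Phi t) ^ (n - 1)) = - tail_moment n"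
proof -
  define F where "F t = std_normal_density t * (1 - Phi t) ^ n" for t
  define f where "f t = - (t * std_normal_density t * (1 - Phi t) ^ n)
      - real n * (std_normal_density t ^ 2 * (1 - Phi t) ^ (n - 1))" for t
  have moment_integrable: "integrable lborel (\<lambda>t. t * std_normal_density t * (1 - Phi t) ^ n)"
    using abs_one_minus_Phi_power_le_1 by (intro integrable_std_normal_first_moment_bounded) auto
  have sq_integrable: "integrable lborel (\<lambda>t. std_normal_density t ^ 2 * (1 - Phi t) ^ (n - 1))"
  proof -
    have "integrable lborel (\<lambda>t. std_normal_density t * (std_normal_density t * (1 - Phi t) ^ (n - 1)))"
      using std_normal_density_le_1 normal_density_nonneg[of 0 1] abs_one_minus_Phi_power_le_1
      by (intro integrable_mult_bounded[where f=std_normal_density])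
         (auto simp: abs_mult intro: mult_le_one)
    then show ?thesis by (simp add: power2_eq_square mult.assoc)
  qed
  have "(LINT t|lborel. f t) = 0"
  proof (rule lborel_integral_eq_0_if_antiderivative_vanishes)
    show "(F has_real_derivative f t) (at t)" for t
      unfolding F_def f_def
      by (auto intro!: derivative_eq_intros has_real_derivative_std_normal_density
          has_real_derivative_Phi simp: algebra_simps power2_eq_square)
    show "isCont f t" for t
      unfolding f_def
      using DERIV_isCont[OF has_real_derivative_std_normal_density] isCont_Phi
      by (intro continuous_intros)
    show "integrable lborel f"
      unfolding f_def using moment_integrable sq_integrable
      by (intro Bochner_Integration.integrable_diff integrable_minus integrable_mult_right)
    have "\<forall>t. norm (F t) \<le> std_normal_density t"
      unfolding F_def using abs_one_minus_Phi_power_le_1[of _ n] normal_density_nonneg[of 0 1]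
      by (simp add: abs_mult mult_left_le)
    then have bound: "eventually (\<lambda>t. norm (F t) \<le> std_normal_density t) F'" for F'
      by (rule always_eventually)
    have "(std_normal_density \<longlongrightarrow> 0) at_top" "(std_normal_density \<longlongrightarrow> 0) at_bot"
      unfolding std_normal_density_def[abs_def] by real_asymp+
    then show "(F \<longlongrightarrow> 0) at_top" "(F \<longlongrightarrow> 0) at_bot"
      by (auto intro: Lim_null_comparison[OF bound])
  qed
  moreover have "(LINT t|lborel. f t) = (LINT t|lborel. - (t * std_normal_density t * (1 - Phi t) ^ n))
      - (LINT t|lborel. real n * (std_normal_density t ^ 2 * (1 - Phi t) ^ (n - 1)))"
    unfolding f_def
    by (rule Bochner_Integration.integral_diff[OF integrable_minus[OF moment_integrable]
          integrable_mult_right[OF sq_integrable]])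
  ultimately show ?thesis by (simp add: tail_moment_def)
qed

lemma P_eq_tail_moment: "P n = - 2 * sqrt pi * tail_moment n"
proof -
  have "exp (- t\<^sup>2) = 2 * pi * std_normal_density t ^ 2" for t
    by (simp add: std_normal_density_def power_divide power_mult_distrib
        exp_double[symmetric] power2_eq_square[of "exp _"])
  then have "P n = real n / sqrt pi * (2 * pi)
      * (LINT t|lborel. std_normal_density t ^ 2 * (1 - Phi t) ^ (n - 1))"
    unfolding P_def by (simp add: mult.assoc)
  also have "\<dots> = 2 * pi / sqrt pi * - tail_moment n"
    by (simp flip: integral_sq_std_normal_density_Phi)
  also have "2 * pi / sqrt pi = 2 * sqrt pi"
    by (simp add: divide_eq_eq mult.assoc)
  finally show ?thesis by simp
qed

lemma tail_moment_less_Suc: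
  assumes "2 \<le> m"
  shows "tail_moment m < tail_moment (Suc m)"
proof -
  define h where "h t = t * std_normal_density t * ((1 - Phi t) ^ m * Phi t)" for t
  have h_integrable: "integrable lborel h"
    unfolding h_def using Phi_nonneg Phi_le_1 abs_one_minus_Phi_power_le_1
    by (intro integrable_std_normal_first_moment_bounded) (auto simp: abs_mult mult_le_one)
  have "tail_moment (Suc m) - tail_moment m
      = (LINT t|lborel. t * std_normal_density t * (1 - Phi t) ^ Suc m
          - t * std_normal_density t * (1 - Phi t) ^ m)"
    unfolding tail_moment_def using abs_one_minus_Phi_power_le_1
    by (intro Bochner_Integration.integral_diff[symmetric] integrable_std_normal_first_moment_bounded)
       (auto simp del: power_Suc)
  also have "\<dots> = - (LINT t|lborel. h t)"
    unfolding integral_minus[symmetric] h_def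
    by (intro Bochner_Integration.integral_cong) (auto simp: algebra_simps)
  finally have diff: "tail_moment (Suc m) - tail_moment m = - (LINT t|lborel. h t)" .
  have "(LINT t|lborel. h t) < 0"
  proof (rule lborel_integral_neg_if_reflection_sum_neg[OF h_integrable])
    fix t :: real
    assume "0 < t"
    then have "1 - Phi t < Phi t" using Phi_strict_mono[of 0 t] Phi_0 by simp
    then have "(1 - Phi t) ^ m * Phi t < Phi t ^ m * (1 - Phi t)"
      using Phi_less_1[of t] assms by (intro power_swap_mult_less) auto
    then have "t * std_normal_density t * ((1 - Phi t) ^ m * Phi t - Phi t ^ m * (1 - Phi t)) < 0"
      using \<open>0 < t\<close> normal_density_pos[of 1 0 t] by (intro mult_pos_neg) auto
    then show "h t + h (- t) < 0"
      by (simp add: h_def Phi_minus std_normal_density_minus algebra_simps)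
  qed
  with diff show ?thesis by linarith
qed

theorem mainTheorem6:
  fixes m :: nat
  assumes "m \<ge> 2"
  shows "P (m + 1) < P m"
  using tail_moment_less_Suc[OF assms] by (simp add: P_eq_tail_moment)

end
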